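(* Let $f$ be a successor function for a geometry $(G,I,O)$ and let $\mathcal P_f$ be its induced path cover. Then $f$ is a flow function (i.e. there is a partial order $\le$ on $V(G)$ with $(f,\le)$ a flow) if and only if $\mathcal P_f$ is a causal path cover.
   Context: Graphs are finite, simple, undirected, without self-loops; $v\sim w$ denotes adjacency. A geometry is $(G,I,O)$ with $I,O\subseteq V(G)$; $O^c=V(G)\setminus O$, $I^c=V(G)\setminus I$. A flow for $(G,I,O)$ is a pair $(f,\le)$, $f:O^c\to I^c$, $\le$ a partial order on $V(G)$, with, for all $v\in O^c$, $w\in V(G)$: $v\sim f(v)$; $v\le f(v)$; $w\sim f(v)\Rightarrow v\le w$. A path cover of $(G,I,O)$ is a collection of directed paths in $G$ (possibly trivial) such that every vertex lies on exactly one path, each path meets $I$ at most at its initial vertex, and each path meets $O$ exactly at its final vertex. A successor function is an injective $f:O^c\to I^c$ with $v\sim f(v)$ such that the arcs $v\to f(v)$ ($v\in O^c$) form a path cover, denoted $\mathcal P_f$. For a family $\mathcal P$ of vertex-disjoint directed paths, an edge is covered by $\mathcal P$ if it underlies an arc of a path of $\mathcal P$. An influencing walk for $\mathcal P$ is a walk that is a concatenation of zero or more segments of the types (i) $v\to w$, an arc of a path of $\mathcal P$; (ii) $v\to z\to w$ with $v\to z$ an arc of a path of $\mathcal P$ and $zw\in E(G)$ not covered by $\mathcal P$. A vicious circuit for $\mathcal P$ is a closed influencing walk (starting and ending at the same vertex) with at least one segment. A causal path cover is a path cover with no vicious circuits. *)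

theory Defs
  imports Main
begin

definition simple_graph :: "'a set \<Rightarrow> ('a \<Rightarrow> 'a \<Rightarrow> bool) \<Rightarrow> bool" where
  "simple_graph V E \<longleftrightarrow> finite V \<and> (\<forall>v w. E v w \<longrightarrow> v \<in> V \<and> w \<in> V)
     \<and> (\<forall>v w. E v w \<longrightarrow> E w v) \<and> (\<forall>v. \<not> E v v)"

definition geometry :: "'a set \<Rightarrow> ('a \<Rightarrow> 'a \<Rightarrow> bool) \<Rightarrow> 'a set \<Rightarrow> 'a set \<Rightarrow> bool" where
  "geometry V E Ins Outs \<longleftrightarrow> simple_graph V E \<and> Ins \<subseteq> V \<and> Outs \<subseteq> V"

definition is_flow :: "'a set \<Rightarrow> ('a \<Rightarrow> 'a \<Rightarrow> bool) \<Rightarrow> 'a set \<Rightarrow> 'a set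
    \<Rightarrow> ('a \<Rightarrow> 'a) \<Rightarrow> ('a \<times> 'a) set \<Rightarrow> bool" where
  "is_flow V E Ins Outs f R \<longleftrightarrow>
     (\<forall>v \<in> V - Outs. f v \<in> V - Ins) \<and> partial_order_on V R \<and>
     (\<forall>v \<in> V - Outs. E v (f v) \<and> (v, f v) \<in> R \<and> (\<forall>w \<in> V. E w (f v) \<longrightarrow> (v, w) \<in> R))"

definition is_flow_function :: "'a set \<Rightarrow> ('a \<Rightarrow> 'a \<Rightarrow> bool) \<Rightarrow> 'a set \<Rightarrow> 'a set
    \<Rightarrow> ('a \<Rightarrow> 'a) \<Rightarrow> bool" where
  "is_flow_function V E Ins Outs f \<longleftrightarrow> (\<exists>R. is_flow V E Ins Outs f R)"

definition dpath :: "'a set \<Rightarrow> ('a \<Rightarrow> 'a \<Rightarrow> bool) \<Rightarrow> 'a list \<Rightarrow> bool" where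
  "dpath V E p \<longleftrightarrow> p \<noteq> [] \<and> distinct p \<and> set p \<subseteq> V \<and>
     (\<forall>i. Suc i < length p \<longrightarrow> E (p ! i) (p ! Suc i))"

definition path_arcs :: "'a list \<Rightarrow> ('a \<times> 'a) set" where
  "path_arcs p = set (zip p (tl p))"

definition family_arcs :: "'a list set \<Rightarrow> ('a \<times> 'a) set" where
  "family_arcs P = (\<Union>p \<in> P. path_arcs p)"

definition path_cover :: "'a set \<Rightarrow> ('a \<Rightarrow> 'a \<Rightarrow> bool) \<Rightarrow> 'a set \<Rightarrow> 'a set
    \<Rightarrow> 'a list set \<Rightarrow> bool" where
  "path_cover V E Ins Outs P \<longleftrightarrow>
     (\<forall>p \<in> P. dpath V E p) \<and>
     (\<forall>v \<in> V. \<exists>!p. p \<in> P \<and> v \<in> set p) \<and>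
     (\<forall>p \<in> P. \<forall>i < length p. p ! i \<in> Ins \<longrightarrow> i = 0) \<and>
     (\<forall>p \<in> P. last p \<in> Outs \<and> (\<forall>i < length p. p ! i \<in> Outs \<longrightarrow> i = length p - 1))"

definition successor_function :: "'a set \<Rightarrow> ('a \<Rightarrow> 'a \<Rightarrow> bool) \<Rightarrow> 'a set \<Rightarrow> 'a set
    \<Rightarrow> ('a \<Rightarrow> 'a) \<Rightarrow> bool" where
  "successor_function V E Ins Outs f \<longleftrightarrow>
     inj_on f (V - Outs) \<and> (\<forall>v \<in> V - Outs. f v \<in> V - Ins \<and> E v (f v)) \<and>
     (\<exists>P. path_cover V E Ins Outs P \<and> family_arcs P = {(v, f v) | v. v \<in> V - Outs})"

text \<open>The path cover induced by f (unique when f is a successor function).\<close>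
definition induced_cover :: "'a set \<Rightarrow> ('a \<Rightarrow> 'a \<Rightarrow> bool) \<Rightarrow> 'a set \<Rightarrow> 'a set
    \<Rightarrow> ('a \<Rightarrow> 'a) \<Rightarrow> 'a list set" where
  "induced_cover V E Ins Outs f =
     (SOME P. path_cover V E Ins Outs P \<and> family_arcs P = {(v, f v) | v. v \<in> V - Outs})"

definition covered :: "'a list set \<Rightarrow> 'a \<Rightarrow> 'a \<Rightarrow> bool" where
  "covered P z w \<longleftrightarrow> (z, w) \<in> family_arcs P \<or> (w, z) \<in> family_arcs P"

text \<open>Influencing walks, as vertex sequences built from segments.\<close>
inductive infl_walk :: "('a \<Rightarrow> 'a \<Rightarrow> bool) \<Rightarrow> 'a list set \<Rightarrow> 'a list \<Rightarrow> bool"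
  for E P where
  nil: "infl_walk E P [v]"
| seg1: "(v, w) \<in> family_arcs P \<Longrightarrow> infl_walk E P (w # ws) \<Longrightarrow> infl_walk E P (v # w # ws)"
| seg2: "(v, z) \<in> family_arcs P \<Longrightarrow> E z w \<Longrightarrow> \<not> covered P z w \<Longrightarrow>
         infl_walk E P (w # ws) \<Longrightarrow> infl_walk E P (v # z # w # ws)"

text \<open>Closed influencing walk with at least one segment (i.e. at least two vertex entries).\<close>
definition vicious_circuit :: "('a \<Rightarrow> 'a \<Rightarrow> bool) \<Rightarrow> 'a list set \<Rightarrow> 'a list \<Rightarrow> bool" where
  "vicious_circuit E P ws \<longleftrightarrow> infl_walk E P ws \<and> 2 \<le> length ws \<and> hd ws = last ws"

definition causal_path_cover :: "'a set \<Rightarrow> ('a \<Rightarrow> 'a \<Rightarrow> bool) \<Rightarrow> 'a set \<Rightarrow> 'a set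
    \<Rightarrow> 'a list set \<Rightarrow> bool" where
  "causal_path_cover V E Ins Outs P \<longleftrightarrow> path_cover V E Ins Outs P \<and> (\<nexists>ws. vicious_circuit E P ws)"

end

theory Submission
  imports Defs
begin

(*
  A vicious circuit is a closed walk built from two kinds of segments,
  v -> f v and v -> f v -> w (with f v w an uncovered edge).  Each segment only
  matters through its endpoints, so we collect them in the one-step "influence
  relation" of the path family.  Then:
    (1) a vicious circuit exists iff the influence relation has a cycle;
    (2) if (f, R) is a flow, every influence step is a strict R-step, hence the
        influence relation sits inside the acyclic relation R - Id;
    (3) if the influence relation is acyclic, the reflexive closure of its transitive
        closure (restricted to V) is a partial order making f a flow.
*)

text \<open>One segment of an influencing walk, recorded by its endpoints: either a path arc
  \<open>v \<rightarrow> z\<close>, or a path arc \<open>v \<rightarrow> z\<close> followed by an uncovered edge \<open>z w\<close>.\<close>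
definition influence_rel :: "('a \<Rightarrow> 'a \<Rightarrow> bool) \<Rightarrow> 'a list set \<Rightarrow> ('a \<times> 'a) set" where
  "influence_rel E P =
     {(v, w). \<exists>z. (v, z) \<in> family_arcs P \<and> (w = z \<or> E z w \<and> \<not> covered P z w)}"

lemma infl_walk_trancl:
  assumes "infl_walk E P ws" and "2 \<le> length ws"
  shows "(hd ws, last ws) \<in> (influence_rel E P)\<^sup>+"
  using assms
proof (induction rule: infl_walk.induct)
  case (nil v)
  then show ?case by simp
next
  case (seg1 v w ws)
  then have step: "(v, w) \<in> influence_rel E P" unfolding influence_rel_def by blast
  show ?case
  proof (cases ws)
    case Nil
    with step show ?thesis by simp
  next
    case (Cons u us)
    with seg1.IH have "(w, last (w # ws)) \<in> (influence_rel E P)\<^sup>+" by simp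
    with step show ?thesis by simp
  qed
next
  case (seg2 v z w ws)
  then have step: "(v, w) \<in> influence_rel E P" unfolding influence_rel_def by blast
  show ?case
  proof (cases ws)
    case Nil
    with step show ?thesis by simp
  next
    case (Cons u us)
    with seg2.IH have "(w, last (w # ws)) \<in> (influence_rel E P)\<^sup>+" by simp
    with step show ?thesis by simp
  qed
qed

text \<open>Conversely, every influence step is realised by a one-segment walk, and walks can be
  prefixed by segments, so every chain of influence steps is an influencing walk.\<close>
lemma infl_walk_prepend_step:
  assumes "(v, w) \<in> influence_rel E P" and "infl_walk E P (w # ws)"
  shows "\<exists>us. infl_walk E P (v # us @ w # ws)"
proof -
  obtain z where arc: "(v, z) \<in> family_arcs P" and seg: "w = z \<or> E z w \<and> \<not> covered P z w"
    using assms(1) unfolding influence_rel_def by blast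
  show ?thesis
  proof (cases "w = z")
    case True
    then have "infl_walk E P (v # [] @ w # ws)" using arc assms(2) by (simp add: infl_walk.seg1)
    then show ?thesis by blast
  next
    case False
    then have "infl_walk E P (v # [z] @ w # ws)" using arc seg assms(2) by (simp add: infl_walk.seg2)
    then show ?thesis by blast
  qed
qed

lemma trancl_infl_walk:
  assumes "(a, b) \<in> (influence_rel E P)\<^sup>+"
  shows "\<exists>ws. infl_walk E P ws \<and> 2 \<le> length ws \<and> hd ws = a \<and> last ws = b"
  using assms
proof (induction rule: converse_trancl_induct)
  case (base v)
  from infl_walk_prepend_step[OF base infl_walk.nil] obtain us where "infl_walk E P (v # us @ [b])"
    by blast
  then show ?case by fastforce
next
  case (step v w)
  then obtain ws where ws: "infl_walk E P ws" "2 \<le> length ws" "hd ws = w" "last ws = b" by blast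
  then obtain ws' where ws_eq: "ws = w # ws'" by (cases ws) auto
  from infl_walk_prepend_step[OF step.hyps(1)] ws ws_eq obtain us
    where walk: "infl_walk E P (v # us @ w # ws')" by auto
  have "last (v # us @ w # ws') = b" using ws(4) ws_eq by simp
  with walk show ?case by (intro exI[of _ "v # us @ w # ws'"]) simp
qed

lemma vicious_circuit_iff_cyclic:
  "(\<exists>ws. vicious_circuit E P ws) \<longleftrightarrow> \<not> acyclic (influence_rel E P)"
proof
  assume "\<exists>ws. vicious_circuit E P ws"
  then obtain ws where "infl_walk E P ws" "2 \<le> length ws" "hd ws = last ws"
    unfolding vicious_circuit_def by blast
  with infl_walk_trancl show "\<not> acyclic (influence_rel E P)" unfolding acyclic_def by metis
next
  assume "\<not> acyclic (influence_rel E P)"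
  then obtain a where "(a, a) \<in> (influence_rel E P)\<^sup>+" unfolding acyclic_def by blast
  from trancl_infl_walk[OF this] show "\<exists>ws. vicious_circuit E P ws"
    unfolding vicious_circuit_def by metis
qed

lemma flow_influence_strict:
  assumes graph: "simple_graph V E"
    and arcs: "family_arcs P = {(v, f v) | v. v \<in> V - Outs}"
    and flow: "is_flow V E Ins Outs f R"
  shows "influence_rel E P \<subseteq> R - Id"
proof
  fix p assume "p \<in> influence_rel E P"
  then obtain v w z where p: "p = (v, w)" and arc: "(v, z) \<in> family_arcs P"
    and seg: "w = z \<or> E z w \<and> \<not> covered P z w"
    unfolding influence_rel_def by blast
  from arc arcs have v: "v \<in> V - Outs" and z: "z = f v" by auto
  have succ: "E v z" "(v, z) \<in> R" "\<forall>u \<in> V. E u z \<longrightarrow> (v, u) \<in> R"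
    using flow v z unfolding is_flow_def by auto
  have "(v, w) \<in> R \<and> v \<noteq> w"
  proof (cases "w = z")
    case True
    moreover have "v \<noteq> z" using succ(1) graph unfolding simple_graph_def by blast
    ultimately show ?thesis using succ(2) by simp
  next
    case False
    with seg have edge: "E z w" and uncov: "\<not> covered P z w" by auto
    then have "w \<in> V" "E w z" using graph unfolding simple_graph_def by blast+
    then have "(v, w) \<in> R" using succ(3) by blast
    moreover have "v \<noteq> w" using arc uncov unfolding covered_def by blast
    ultimately show ?thesis ..
  qed
  then show "p \<in> R - Id" using p by simp
qed

lemma flow_influence_acyclic:
  assumes "simple_graph V E"
    and "family_arcs P = {(v, f v) | v. v \<in> V - Outs}"
    and flow: "is_flow V E Ins Outs f R"
  shows "acyclic (influence_rel E P)"
proof -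
  have "acyclic (R - Id)"
    using flow unfolding is_flow_def by (blast intro: partial_order_on_acyclic)
  then show ?thesis using flow_influence_strict[OF assms] by (rule acyclic_subset)
qed

lemma acyclic_closure_partial_order:
  assumes "acyclic S" and "S \<subseteq> A \<times> A"
  shows "partial_order_on A (Id_on A \<union> S\<^sup>+)"
proof -
  have "S\<^sup>+ \<subseteq> A \<times> A" using trancl_subset_Sigma[OF assms(2)] .
  moreover have "trans (Id_on A \<union> S\<^sup>+)" unfolding trans_def by (auto intro: trancl_trans)
  moreover have "antisym (Id_on A \<union> S\<^sup>+)"
    using assms(1) unfolding antisym_def acyclic_def by (auto intro: trancl_trans)
  ultimately show ?thesis
    unfolding partial_order_on_def preorder_on_def refl_on_def by auto
qed

text \<open>The three
  ways a neighbour \<open>w\<close> of \<open>f v\<close> can arise (uncovered edge, next arc, previous arc) are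
  handled by an influence step, two influence steps, and injectivity respectively.\<close>
lemma acyclic_influence_flow:
  assumes graph: "simple_graph V E"
    and inj: "inj_on f (V - Outs)"
    and succ: "\<forall>v \<in> V - Outs. f v \<in> V - Ins \<and> E v (f v)"
    and arcs: "family_arcs P = {(v, f v) | v. v \<in> V - Outs}"
    and acyc: "acyclic (influence_rel E P)"
  shows "is_flow V E Ins Outs f (Id_on V \<union> (influence_rel E P)\<^sup>+)"
proof -
  let ?S = "influence_rel E P"
  let ?R = "Id_on V \<union> ?S\<^sup>+"
  have arc_iff: "(a, b) \<in> family_arcs P \<longleftrightarrow> a \<in> V - Outs \<and> b = f a" for a b
    using arcs by auto
  have "?S \<subseteq> V \<times> V"
    using succ graph unfolding influence_rel_def arc_iff simple_graph_def by blast
  with acyc have order: "partial_order_on V ?R" by (rule acyclic_closure_partial_order)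
  have flow_step: "(v, w) \<in> ?R" if v: "v \<in> V - Outs" and w: "w \<in> V" "E w (f v)" for v w
  proof -
    have edge: "E (f v) w" using w(2) graph unfolding simple_graph_def by blast
    consider "\<not> covered P (f v) w" | "(f v, w) \<in> family_arcs P" | "(w, f v) \<in> family_arcs P"
      unfolding covered_def by blast
    then show ?thesis
    proof cases
      case 1
      then have "(v, w) \<in> ?S" using v edge unfolding influence_rel_def arc_iff by blast
      then show ?thesis by auto
    next
      case 2
      then have "(v, f v) \<in> ?S" "(f v, w) \<in> ?S" using v unfolding influence_rel_def arc_iff by auto
      then show ?thesis by (meson UnI2 trancl.r_into_trancl trancl_into_trancl)
    next
      case 3
      then have "w = v" using inj v unfolding arc_iff by (auto dest: inj_onD)
      then show ?thesis using w by auto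
    qed
  qed
  have "(v, f v) \<in> ?S" if "v \<in> V - Outs" for v
    using that unfolding influence_rel_def arc_iff by blast
  then show ?thesis
    unfolding is_flow_def using order succ flow_step by blast
qed

lemma induced_cover_spec:
  assumes "successor_function V E Ins Outs f"
  shows "path_cover V E Ins Outs (induced_cover V E Ins Outs f)"
    and "family_arcs (induced_cover V E Ins Outs f) = {(v, f v) | v. v \<in> V - Outs}"
proof -
  have "\<exists>P. path_cover V E Ins Outs P \<and> family_arcs P = {(v, f v) | v. v \<in> V - Outs}"
    using assms unfolding successor_function_def by blast
  then have "path_cover V E Ins Outs (induced_cover V E Ins Outs f)
      \<and> family_arcs (induced_cover V E Ins Outs f) = {(v, f v) | v. v \<in> V - Outs}"
    unfolding induced_cover_def by (rule someI_ex)
  then show "path_cover V E Ins Outs (induced_cover V E Ins Outs f)"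
    and "family_arcs (induced_cover V E Ins Outs f) = {(v, f v) | v. v \<in> V - Outs}"
    by auto
qed

theorem mainTheorem5:
  fixes V :: "'a set" and E :: "'a \<Rightarrow> 'a \<Rightarrow> bool" and Ins Outs :: "'a set" and f :: "'a \<Rightarrow> 'a"
  assumes "geometry V E Ins Outs"
    and "successor_function V E Ins Outs f"
  shows "is_flow_function V E Ins Outs f \<longleftrightarrow> causal_path_cover V E Ins Outs (induced_cover V E Ins Outs f)"
proof -
  let ?P = "induced_cover V E Ins Outs f"
  have graph: "simple_graph V E" using assms(1) unfolding geometry_def by blast
  note cover = induced_cover_spec[OF assms(2)]
  have "is_flow_function V E Ins Outs f \<longleftrightarrow> acyclic (influence_rel E ?P)"
  proof
    assume "is_flow_function V E Ins Outs f"
    then show "acyclic (influence_rel E ?P)"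
      unfolding is_flow_function_def using flow_influence_acyclic[OF graph cover(2)] by blast
  next
    assume "acyclic (influence_rel E ?P)"
    with acyclic_influence_flow[OF graph _ _ cover(2)] assms(2)
    show "is_flow_function V E Ins Outs f"
      unfolding is_flow_function_def successor_function_def by blast
  qed
  then show ?thesis
    unfolding causal_path_cover_def vicious_circuit_iff_cyclic using cover(1) by blast
qed

end
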